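(* In the setting below, if a PHB $\mathbf{E}$ is $\Delta^-$-stable but $\Delta^+$-unstable, then it can be expressed uniquely as a nonsplit extension of PHBs $0\to\mathbf{L}^+\to\mathbf{E}\to\mathbf{L}^-\to0$, where $\mathbf{L}^\pm$ are parabolic Higgs line bundles with discrete data $S$ and $S^c$ respectively. Conversely, any such extension is $\Delta^-$-stable but $\Delta^+$-unstable.
   Context: Fix distinct $x_1,\dots,x_n\in\mathbb{C}\mathbb{P}^1$. Weights $\beta=(\beta_1(x_i),\beta_2(x_i))_i$ with $0\le\beta_1(x_i)<\beta_2(x_i)<1$ form the weight space $Q$; $\varepsilon_T(\alpha)=\sum_{i\in T}\alpha_i-\sum_{i\notin T}\alpha_i$ for $\alpha=\beta_2-\beta_1$. Walls: intersections of $Q$ with hyperplanes $\varepsilon_T(\beta_2-\beta_1)=0$; chambers: components of the complement. Throughout, PHBs are rank-2 parabolic Higgs bundles $(E,\Phi)$ over $\mathbb{C}\mathbb{P}^1$ which are trivial as holomorphic bundles, with fixed determinant and trace-free Higgs field ($E$ has a line $E_{x_i,2}\subset E_{x_i}$ at each $x_i$ with weights $\beta_1(x_i)<\beta_2(x_i)$; $\Phi$ a meromorphic $\mathrm{End}_0(E)\otimes K_{\mathbb{C}\mathbb{P}^1}$-valued section with at most simple poles at the $x_i$, residues mapping $E_{x_i}$ into $E_{x_i,2}$ and killing $E_{x_i,2}$), and parabolic Higgs line bundles are holomorphically trivial. A parabolic Higgs line bundle has at each $x_i$ weight $\beta_1(x_i)$ or $\beta_2(x_i)$; its discrete data is the set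 of $i$ with weight $\beta_2(x_i)$ (for a subbundle $L\subset E$, $\{i:L_{x_i}=E_{x_i,2}\}$; quotients get complementary weights). $(E,\Phi)$ is $\beta$-stable iff every $\Phi$-invariant line subbundle $L$ with discrete data $S_L$ has $\varepsilon_{S_L}(\beta_2-\beta_1)<0$. Fix a point of $Q$ on exactly one wall $W$, with adjacent chambers $\Delta^\pm$, and let $S$ be the index set of $W$ normalized so that $\varepsilon_S(\beta_2-\beta_1)>0$ on $\Delta^+$; $\Delta^\pm$-stable means stable for weights in $\Delta^\pm$. *)

theory Defs
  imports "HOL-Analysis.Analysis"
begin

text \<open>Model: the underlying bundle E is the trivial bundle with fibre complex^2.
  Marked points x i in CP^1 are encoded as complex option (None = the point at infinity).\<close>

definition cline :: "complex^2 \<Rightarrow> (complex^2) set" where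
  "cline v = {c *s v | c. True}"

definition is_line :: "(complex^2) set \<Rightarrow> bool" where
  "is_line L \<longleftrightarrow> (\<exists>v. v \<noteq> 0 \<and> L = cline v)"

text \<open>A PHB: flags fl i (the lines E_{x_i,2}) and the residues A i of the Higgs field at x_i.
  Residues map the fibre into fl i and kill fl i; holomorphy at infinity of
  Phi = sum over finite x_i of A_i dz/(z - x_i) (with A at the point at infinity, if it is
  a marked point, equal to its residue there) amounts to sum A_i = 0.\<close>

definition is_PHB :: "('n::finite \<Rightarrow> (complex^2) set) \<Rightarrow> ('n \<Rightarrow> complex^2^2) \<Rightarrow> bool" where
  "is_PHB fl A \<longleftrightarrow> (\<forall>i. is_line (fl i)) \<and> (\<forall>i w. A i *v w \<in> fl i)
     \<and> (\<forall>i. \<forall>w\<in>fl i. A i *v w = 0) \<and> (\<Sum>i\<in>UNIV. A i) = 0"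

text \<open>The Higgs field in the affine coordinate z (coefficient of dz), applied to a vector.\<close>
definition higgs_apply :: "('n::finite \<Rightarrow> complex option) \<Rightarrow> ('n \<Rightarrow> complex^2^2) \<Rightarrow> complex \<Rightarrow> complex^2 \<Rightarrow> complex^2" where
  "higgs_apply x A z w = (\<Sum>i\<in>{i. x i \<noteq> None}. (1 / (z - the (x i))) *s (A i *v w))"

definition poles :: "('n::finite \<Rightarrow> complex option) \<Rightarrow> complex set" where
  "poles x = {the (x i) | i. x i \<noteq> None}"

text \<open>A trivial line subbundle (constant line L) is Phi-invariant.\<close>
definition higgs_invariant :: "('n::finite \<Rightarrow> complex option) \<Rightarrow> ('n \<Rightarrow> complex^2^2) \<Rightarrow> (complex^2) set \<Rightarrow> bool" where
  "higgs_invariant x A L \<longleftrightarrow> (\<forall>z. z \<notin> poles x \<longrightarrow> (\<forall>w\<in>L. higgs_apply x A z w \<in> L))"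

definition disc_data :: "('n \<Rightarrow> (complex^2) set) \<Rightarrow> (complex^2) set \<Rightarrow> 'n set" where
  "disc_data fl L = {i. L = fl i}"

definition quot_disc_data :: "('n \<Rightarrow> (complex^2) set) \<Rightarrow> (complex^2) set \<Rightarrow> 'n set" where
  "quot_disc_data fl L = {i. fl i \<noteq> L}"

definition eps :: "'n::finite set \<Rightarrow> real^'n \<Rightarrow> real" where
  "eps T a = (\<Sum>i\<in>T. a$i) - (\<Sum>i\<in>-T. a$i)"

definition weight_space :: "((real^'n::finite) \<times> (real^'n)) set" where
  "weight_space = {(b1, b2). \<forall>i. 0 \<le> b1$i \<and> b1$i < b2$i \<and> b2$i < 1}"

definition alpha :: "(real^'n::finite) \<times> (real^'n) \<Rightarrow> real^'n" where
  "alpha b = snd b - fst b"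

definition wall :: "'n::finite set \<Rightarrow> ((real^'n) \<times> (real^'n)) set" where
  "wall T = {b \<in> weight_space. eps T (alpha b) = 0}"

definition chambers :: "((real^'n::finite) \<times> (real^'n)) set set" where
  "chambers = components (weight_space - (\<Union>T. wall T))"

definition stable :: "('n::finite \<Rightarrow> complex option) \<Rightarrow> ('n \<Rightarrow> (complex^2) set) \<Rightarrow> ('n \<Rightarrow> complex^2^2)
    \<Rightarrow> (real^'n) \<times> (real^'n) \<Rightarrow> bool" where
  "stable x fl A b \<longleftrightarrow>
     (\<forall>L. is_line L \<and> higgs_invariant x A L \<longrightarrow> eps (disc_data fl L) (alpha b) < 0)"

definition chamber_stable where
  "chamber_stable x fl A D \<longleftrightarrow> (\<forall>b\<in>D. stable x fl A b)"

definition chamber_unstable where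
  "chamber_unstable x fl A D \<longleftrightarrow> (\<forall>b\<in>D. \<not> stable x fl A b)"

text \<open>The extension 0 -> L -> E -> E/L -> 0 splits as PHBs: there is a complementary
  Phi-invariant trivial line subbundle L' with E = L (+) L' compatibly with the flags.\<close>
definition PHB_splits where
  "PHB_splits x fl A L \<longleftrightarrow>
     (\<exists>L'. is_line L' \<and> L' \<noteq> L \<and> higgs_invariant x A L' \<and> (\<forall>i. fl i = L \<or> fl i = L'))"

definition nonsplit_ext where
  "nonsplit_ext x fl A S L \<longleftrightarrow> is_line L \<and> higgs_invariant x A L \<and> disc_data fl L = S
     \<and> quot_disc_data fl L = - S \<and> \<not> PHB_splits x fl A L"

end

theory Submission
  imports Defs
begin

text \<open>Only the discrete data of \<open>\<Phi>\<close>-invariant lines enter the stability condition, so the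
  theorem is combinatorial. At the wall point \<open>b0\<close> every weight of \<open>\<alpha>\<close> is positive and
  \<open>\<epsilon>(S) = \<epsilon>(S\<^sup>c) = 0\<close>. Since \<open>\<epsilon>(T)\<close> has constant sign on a chamber and \<open>b0\<close> lies on
  no wall but that of \<open>S\<close>, an invariant line destabilising \<open>\<Delta>\<^sup>+\<close> but not \<open>\<Delta>\<^sup>-\<close> has discrete
  data exactly \<open>S\<close>; the extension it defines cannot split, since a complementary invariant
  line would have data \<open>S\<^sup>c\<close> and destabilise \<open>\<Delta>\<^sup>-\<close>. Conversely, for a nonsplit extension by
  \<open>L\<close>, any other invariant line has as discrete data a proper subset \<open>T\<close> of \<open>S\<^sup>c\<close>, so
  \<open>\<epsilon>(T) < \<epsilon>(S\<^sup>c) = 0\<close> at \<open>b0\<close> and hence on all of \<open>\<Delta>\<^sup>-\<close>.\<close>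

lemma eps_Compl: "eps (- T) a = - eps T a"
  unfolding eps_def by simp

lemma eps_eq_double_sum: "eps T (a::real^'n::finite) = 2 * (\<Sum>i\<in>T. a$i) - (\<Sum>i\<in>UNIV. a$i)"
proof -
  have "(\<Sum>i\<in>UNIV. a$i) = (\<Sum>i\<in>T. a$i) + (\<Sum>i\<in>-T. a$i)"
    by (subst sum.union_disjoint[symmetric]) auto
  thus ?thesis unfolding eps_def by simp
qed

lemma eps_strict_mono:
  fixes a :: "real^'n::finite"
  assumes "T \<subset> U" and "\<forall>i. a$i > 0"
  shows "eps T a < eps U a"
proof -
  have "(\<Sum>i\<in>U. a$i) = (\<Sum>i\<in>U - T. a$i) + (\<Sum>i\<in>T. a$i)"
    using assms(1) by (intro sum.subset_diff) auto
  moreover have "(\<Sum>i\<in>U - T. a$i) > 0"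
    using assms by (intro sum_pos) auto
  ultimately show ?thesis using eps_eq_double_sum[of T a] eps_eq_double_sum[of U a] by linarith
qed

lemma eps_empty_neg:
  fixes a :: "real^'n::finite"
  assumes "\<forall>i. a$i > 0"
  shows "eps {} a < 0"
proof -
  have "eps {} a < eps UNIV a" using assms by (intro eps_strict_mono) auto
  moreover have "eps UNIV a = - eps {} a" using eps_Compl[of "{}" a] by simp
  ultimately show ?thesis by linarith
qed

lemma alpha_pos_weight_space: "b \<in> weight_space \<Longrightarrow> \<forall>i. (alpha b)$i > 0"
  unfolding weight_space_def alpha_def by (cases b) auto

lemma continuous_on_eps_alpha:
  "continuous_on UNIV (\<lambda>b::(real^'n::finite)\<times>(real^'n). eps T (alpha b))"
  unfolding eps_def alpha_def by (intro continuous_intros)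

lemma eps_alpha_neg_near_closure:
  fixes b0 :: "(real^'n::finite)\<times>(real^'n)"
  assumes "b0 \<in> closure D" "eps T (alpha b0) < 0"
  shows "\<exists>b\<in>D. eps T (alpha b) < 0"
proof -
  let ?U = "{b::(real^'n)\<times>(real^'n). eps T (alpha b) < 0}"
  have "open ?U"
    using continuous_on_eps_alpha[of T] by (intro open_Collect_less) (auto intro: continuous_on_const)
  moreover have "b0 \<in> ?U" using assms by simp
  ultimately have "?U \<inter> D \<noteq> {}" using assms(1) open_Int_closure_eq_empty by blast
  thus ?thesis by blast
qed

lemma chamber_nonempty: "D \<in> chambers \<Longrightarrow> D \<noteq> {}"
  unfolding chambers_def using in_components_nonempty by blast

lemma eps_alpha_nonzero_on_chamber:
  assumes "D \<in> chambers" "b \<in> D"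
  shows "eps T (alpha b) \<noteq> 0"
proof -
  have "D \<subseteq> weight_space - (\<Union>T. wall T)"
    using assms(1) in_components_subset unfolding chambers_def by blast
  thus ?thesis using assms(2) unfolding wall_def by blast
qed

lemma eps_alpha_sign_on_chamber:
  assumes "D \<in> chambers" "b \<in> D" "b' \<in> D" "eps T (alpha b) < 0"
  shows "eps T (alpha b') < 0"
proof (rule ccontr)
  assume "\<not> ?thesis"
  hence pos: "eps T (alpha b') > 0"
    using eps_alpha_nonzero_on_chamber[OF assms(1,3), of T] by linarith
  have "connected D" using assms(1) in_components_connected unfolding chambers_def by blast
  hence "connected ((\<lambda>b. eps T (alpha b)) ` D)"
    using connected_continuous_image continuous_on_subset[OF continuous_on_eps_alpha] by blast
  hence "0 \<in> (\<lambda>b. eps T (alpha b)) ` D"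
    using connectedD_interval[of _ "eps T (alpha b)" "eps T (alpha b')" 0] pos assms
    by (meson image_eqI less_imp_le)
  then obtain c where "c \<in> D" "eps T (alpha c) = 0" by auto
  thus False using eps_alpha_nonzero_on_chamber[OF assms(1)] by blast
qed

lemma eps_alpha_neg_on_chamber_of_closure:
  assumes "D \<in> chambers" "b0 \<in> closure D" "eps T (alpha b0) < 0" "b \<in> D"
  shows "eps T (alpha b) < 0"
  using eps_alpha_neg_near_closure[OF assms(2,3)] eps_alpha_sign_on_chamber[OF assms(1) _ assms(4)]
  by blast

locale wall_crossing =
  fixes b0 :: "(real^'n::finite) \<times> (real^'n)" and S :: "'n set"
    and Dp Dm :: "((real^'n) \<times> (real^'n)) set"
  assumes b0_weight: "b0 \<in> weight_space"
    and b0_walls: "\<forall>T. b0 \<in> wall T \<longleftrightarrow> (T = S \<or> T = - S)"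
    and Dp_chamber: "Dp \<in> chambers" and Dm_chamber: "Dm \<in> chambers"
    and b0_closure_Dp: "b0 \<in> closure Dp" and b0_closure_Dm: "b0 \<in> closure Dm"
    and eps_S_Dp: "\<forall>b\<in>Dp. eps S (alpha b) > 0"
    and eps_S_Dm: "\<forall>b\<in>Dm. eps S (alpha b) < 0"
begin

lemma eps_S_b0: "eps S (alpha b0) = 0"
  using b0_walls unfolding wall_def by blast

lemma S_nonempty: "S \<noteq> {}"
  using eps_S_b0 eps_empty_neg alpha_pos_weight_space[OF b0_weight] by force

lemma eps_neg_on_Dm_of_psubset_Compl:
  assumes "T \<subset> - S" "b \<in> Dm"
  shows "eps T (alpha b) < 0"
proof -
  have "eps T (alpha b0) < eps (- S) (alpha b0)"
    using eps_strict_mono[OF assms(1)] alpha_pos_weight_space[OF b0_weight] by blast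
  thus ?thesis
    using eps_Compl[of S] eps_S_b0 eps_alpha_neg_on_chamber_of_closure[OF Dm_chamber b0_closure_Dm]
      assms(2) by simp
qed

lemma eq_S_of_separating:
  assumes Dm_neg: "\<forall>b\<in>Dm. eps T (alpha b) < 0" and "bp \<in> Dp" "\<not> eps T (alpha bp) < 0"
  shows "T = S"
proof -
  have "eps (- T) (alpha bp) < 0"
    using assms(3) eps_alpha_nonzero_on_chamber[OF Dp_chamber assms(2), of T] eps_Compl[of T]
    by simp
  hence Dp_pos: "\<forall>b\<in>Dp. eps (- T) (alpha b) < 0"
    using eps_alpha_sign_on_chamber[OF Dp_chamber assms(2)] by blast
  have "eps T (alpha b0) = 0"
  proof (rule ccontr)
    assume "eps T (alpha b0) \<noteq> 0"
    hence "eps T (alpha b0) < 0 \<or> eps (- T) (alpha b0) < 0" using eps_Compl[of T] by force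
    then show False
    proof
      assume "eps T (alpha b0) < 0"
      then obtain b where "b \<in> Dp" "eps T (alpha b) < 0"
        using eps_alpha_neg_near_closure[OF b0_closure_Dp] by blast
      thus False using Dp_pos eps_Compl[of T] by force
    next
      assume "eps (- T) (alpha b0) < 0"
      then obtain b where "b \<in> Dm" "eps (- T) (alpha b) < 0"
        using eps_alpha_neg_near_closure[OF b0_closure_Dm] by blast
      thus False using Dm_neg eps_Compl[of T] by force
    qed
  qed
  hence "T = S \<or> T = - S" using b0_walls b0_weight unfolding wall_def by blast
  moreover have "T \<noteq> - S" using Dp_pos eps_S_Dp assms(2) by force
  ultimately show ?thesis by blast
qed

lemma nonsplit_ext_unique:
  assumes "nonsplit_ext x fl A S L1" "nonsplit_ext x fl A S L2"
  shows "L1 = L2"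
proof -
  obtain i where "i \<in> S" using S_nonempty by blast
  thus ?thesis using assms unfolding nonsplit_ext_def disc_data_def by blast
qed

lemma nonsplit_ext_of_stable_unstable:
  assumes st: "chamber_stable x fl A Dm" and un: "chamber_unstable x fl A Dp"
  shows "\<exists>L. nonsplit_ext x fl A S L"
proof -
  obtain bp where bp: "bp \<in> Dp" using chamber_nonempty[OF Dp_chamber] by blast
  obtain L where L: "is_line L" "higgs_invariant x A L" "\<not> eps (disc_data fl L) (alpha bp) < 0"
    using un bp unfolding chamber_unstable_def stable_def by blast
  have "\<forall>b\<in>Dm. eps (disc_data fl L) (alpha b) < 0"
    using st L unfolding chamber_stable_def stable_def by blast
  hence data_L: "disc_data fl L = S" using eq_S_of_separating bp L(3) by blast
  have "\<not> PHB_splits x fl A L"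
  proof
    assume "PHB_splits x fl A L"
    then obtain L' where L': "is_line L'" "L' \<noteq> L" "higgs_invariant x A L'"
      "\<forall>i. fl i = L \<or> fl i = L'" unfolding PHB_splits_def by blast
    have "disc_data fl L' = - S" using L' data_L unfolding disc_data_def by auto
    moreover obtain bm where bm: "bm \<in> Dm" using chamber_nonempty[OF Dm_chamber] by blast
    ultimately have "eps (- S) (alpha bm) < 0"
      using st L' unfolding chamber_stable_def stable_def by metis
    thus False using eps_S_Dm bm eps_Compl[of S] by force
  qed
  thus ?thesis
    unfolding nonsplit_ext_def using L data_L by (auto simp: disc_data_def quot_disc_data_def)
qed

lemma unstable_of_nonsplit_ext:
  assumes "nonsplit_ext x fl A S L"
  shows "chamber_unstable x fl A Dp"
proof -
  have "is_line L" "higgs_invariant x A L" "disc_data fl L = S"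
    using assms unfolding nonsplit_ext_def by auto
  thus ?thesis unfolding chamber_unstable_def stable_def using eps_S_Dp by force
qed

lemma stable_of_nonsplit_ext:
  assumes ext: "nonsplit_ext x fl A S L"
  shows "chamber_stable x fl A Dm"
  unfolding chamber_stable_def stable_def
proof (intro ballI allI impI)
  fix b L' assume b: "b \<in> Dm" and L': "is_line L' \<and> higgs_invariant x A L'"
  have data_L: "disc_data fl L = S" and nonsplit: "\<not> PHB_splits x fl A L"
    using ext unfolding nonsplit_ext_def by auto
  show "eps (disc_data fl L') (alpha b) < 0"
  proof (cases "L' = L")
    case True
    thus ?thesis using data_L eps_S_Dm b by simp
  next
    case False
    have "disc_data fl L' \<subseteq> - S" using False data_L unfolding disc_data_def by auto
    moreover have "disc_data fl L' \<noteq> - S"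
    proof
      assume "disc_data fl L' = - S"
      hence "\<forall>i. fl i = L \<or> fl i = L'" using data_L unfolding disc_data_def by blast
      thus False using nonsplit L' False unfolding PHB_splits_def by blast
    qed
    ultimately show ?thesis using eps_neg_on_Dm_of_psubset_Compl b by blast
  qed
qed

end

theorem mainTheorem8:
  fixes x :: "'n::finite \<Rightarrow> complex option"
    and fl :: "'n \<Rightarrow> (complex^2) set" and A :: "'n \<Rightarrow> complex^2^2"
    and b0 :: "(real^'n) \<times> (real^'n)" and S :: "'n set"
    and Dp Dm :: "((real^'n) \<times> (real^'n)) set"
  assumes "inj x"
    and "b0 \<in> weight_space"
    and "\<forall>T. b0 \<in> wall T \<longleftrightarrow> (T = S \<or> T = - S)"
    and "Dp \<in> chambers" and "Dm \<in> chambers"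
    and "b0 \<in> closure Dp" and "b0 \<in> closure Dm"
    and "\<forall>b\<in>Dp. eps S (alpha b) > 0"
    and "\<forall>b\<in>Dm. eps S (alpha b) < 0"
    and "is_PHB fl A"
  shows "(chamber_stable x fl A Dm \<and> chamber_unstable x fl A Dp
            \<longrightarrow> (\<exists>!L. nonsplit_ext x fl A S L))
       \<and> ((\<exists>L. nonsplit_ext x fl A S L)
            \<longrightarrow> chamber_stable x fl A Dm \<and> chamber_unstable x fl A Dp)"
proof -
  interpret wall_crossing b0 S Dp Dm
    using assms(2-9) by unfold_locales
  show ?thesis
  proof (intro conjI impI)
    assume "chamber_stable x fl A Dm \<and> chamber_unstable x fl A Dp"
    then obtain L where "nonsplit_ext x fl A S L"
      using nonsplit_ext_of_stable_unstable by blast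
    thus "\<exists>!L. nonsplit_ext x fl A S L" using nonsplit_ext_unique by blast
  next
    assume "\<exists>L. nonsplit_ext x fl A S L"
    thus "chamber_stable x fl A Dm" using stable_of_nonsplit_ext by blast
  next
    assume "\<exists>L. nonsplit_ext x fl A S L"
    thus "chamber_unstable x fl A Dp" using unstable_of_nonsplit_ext by blast
  qed
qed

end
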